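(* Fix $\mathbf{v}\in\mathbb{R}^{K+1}\setminus\{\mathbf{0}\}$ and $\bar{\mathbf{f}}\in\mathbb{C}^{n}\setminus\{\mathbf{0}\}$, and assume that the matrix $\mathbf{B}(\bar{\mathbf{f}},\mathbf{v})$ defined below is invertible. Then the first-order stationarity (KKT) condition of the unconstrained problem $\min_{\bar{\mathbf{f}},\mathbf{v}} f(\bar{\mathbf{f}},\mathbf{v})$ with respect to $\bar{\mathbf{f}}$, namely $\nabla_{\bar{\mathbf{f}}^*} f(\bar{\mathbf{f}},\mathbf{v})=\mathbf{0}$, holds if and only if $$\mathbf{B}(\bar{\mathbf{f}},\mathbf{v})^{-1}\mathbf{A}(\bar{\mathbf{f}},\mathbf{v})\,\bar{\mathbf{f}}=\lambda(\bar{\mathbf{f}},\mathbf{v})\,\bar{\mathbf{f}},$$ where $$\mathbf{A}(\bar{\mathbf{f}},\mathbf{v})=\lambda_{\mathrm{num}}\Big\{\sum_{j=1}^{K}\Big[R_{\mathrm{target},j}\Big(\tfrac{\mathbf{A}_j^{p}}{\bar{\mathbf{f}}^{H}\mathbf{A}_j^{p}\bar{\mathbf{f}}}+w_j\mathbf{L}_A\Big)+\bar R_{p,j}\tfrac{\mathbf{B}_j^{p}}{\bar{\mathbf{f}}^{H}\mathbf{B}_j^{p}\bar{\mathbf{f}}}+w_jC_j\mathbf{L}_B+w_j\bar R_{p,j}\mathbf{L}_B+C_j\tfrac{\mathbf{B}_j^{p}}{\bar{\mathbf{f}}^{H}\mathbf{B}_j^{p}\bar{\mathbf{f}}}\Big]+\eta_{\mathrm{mc}}\Big[R_{\mathrm{target,mc}}w_{K+1}\mathbf{L}_A+w_{K+1}C_{\mathrm{mc}}\mathbf{L}_B\Big]\Big\},$$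 $$\mathbf{B}(\bar{\mathbf{f}},\mathbf{v})=\lambda_{\mathrm{den}}\Big\{\sum_{j=1}^{K}\Big[R_{\mathrm{target},j}\Big(\tfrac{\mathbf{B}_j^{p}}{\bar{\mathbf{f}}^{H}\mathbf{B}_j^{p}\bar{\mathbf{f}}}+w_j\mathbf{L}_B\Big)+\bar R_{p,j}\tfrac{\mathbf{A}_j^{p}}{\bar{\mathbf{f}}^{H}\mathbf{A}_j^{p}\bar{\mathbf{f}}}+w_jC_j\mathbf{L}_A+w_j\bar R_{p,j}\mathbf{L}_A+C_j\tfrac{\mathbf{A}_j^{p}}{\bar{\mathbf{f}}^{H}\mathbf{A}_j^{p}\bar{\mathbf{f}}}\Big]+\eta_{\mathrm{mc}}\Big[R_{\mathrm{target,mc}}w_{K+1}\mathbf{L}_B+w_{K+1}C_{\mathrm{mc}}\mathbf{L}_A\Big]\Big\},$$ with all quantities $\lambda_{\mathrm{num}},\lambda_{\mathrm{den}},\lambda,w_j,C_j,C_{\mathrm{mc}},\bar R_{p,j},\mathbf{L}_A,\mathbf{L}_B$ evaluated at $(\bar{\mathbf{f}},\mathbf{v})$.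
   Context: Let $K\ge1$, $N_t\ge1$ be integers and $n:=N_t(K+1)$. For each $k\in\{1,\dots,K\}$ let $\mathbf{a}_k\in\mathbb{C}^{N_t}$ and $\gamma_k>0$; let $\sigma^2>0$, $P>0$, $\alpha>0$, $\eta_{\mathrm{mc}}>0$, and real numbers $R_{\mathrm{target},1},\dots,R_{\mathrm{target},K},R_{\mathrm{target,mc}}$ be given. Write $\mathrm{blkdiag}$ for a block-diagonal matrix with $K+1$ diagonal blocks of size $N_t\times N_t$, and $\mathbf{I}$ for the identity. Define the $n\times n$ matrices $\mathbf{A}_k^{c}=\mathrm{blkdiag}(\gamma_k\mathbf{a}_k\mathbf{a}_k^H,\dots,\gamma_k\mathbf{a}_k\mathbf{a}_k^H)+\frac{\sigma^2}{P}\mathbf{I}$, $\mathbf{B}_k^{c}=\mathbf{A}_k^{c}-\mathrm{blkdiag}(\gamma_k\mathbf{a}_k\mathbf{a}_k^H,0,\dots,0)$, $\mathbf{A}_k^{p}=\mathrm{blkdiag}(0,\gamma_k\mathbf{a}_k\mathbf{a}_k^H,\dots,\gamma_k\mathbf{a}_k\mathbf{a}_k^H)+\frac{\sigma^2}{P}\mathbf{I}$, $\mathbf{B}_k^{p}=\mathbf{A}_k^{p}-\mathrm{blkdiag}(0,\dots,0,\gamma_k\mathbf{a}_k\mathbf{a}_k^H,0,\dots,0)$ where the nonzero block is the $(k+1)$-th block. For $\bar{\mathbf{f}}\in\mathbb{C}^n\setminus\{\mathbf 0\}$ define $\bar R_{c,k}(\bar{\mathbf{f}})=\log_2\frac{\bar{\mathbf{f}}^H\mathbf{A}_k^c\bar{\mathbf{f}}}{\bar{\mathbf{f}}^H\mathbf{B}_k^c\bar{\mathbf{f}}}$,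 $\bar R_{p,k}(\bar{\mathbf{f}})=\log_2\frac{\bar{\mathbf{f}}^H\mathbf{A}_k^p\bar{\mathbf{f}}}{\bar{\mathbf{f}}^H\mathbf{B}_k^p\bar{\mathbf{f}}}$, the smoothed minimum (LogSumExp) $S(\bar{\mathbf{f}})=-\alpha\ln\big(\frac1K\sum_{i=1}^K\exp(-\bar R_{c,i}(\bar{\mathbf{f}})/\alpha)\big)$, the weights $\pi_i(\bar{\mathbf{f}})=\exp(-\bar R_{c,i}/\alpha)/\sum_{\ell=1}^K\exp(-\bar R_{c,\ell}/\alpha)$, and $\mathbf{L}_A(\bar{\mathbf{f}})=\sum_{i=1}^K\pi_i\frac{\mathbf{A}_i^c}{\bar{\mathbf{f}}^H\mathbf{A}_i^c\bar{\mathbf{f}}}$, $\mathbf{L}_B(\bar{\mathbf{f}})=\sum_{i=1}^K\pi_i\frac{\mathbf{B}_i^c}{\bar{\mathbf{f}}^H\mathbf{B}_i^c\bar{\mathbf{f}}}$. For $\mathbf{v}=(v_1,\dots,v_{K+1})^T\in\mathbb{R}^{K+1}\setminus\{\mathbf 0\}$, let $\mathbf{E}_k$ ($k=1,\dots,K+1$) be the $(K+1)\times(K+1)$ diagonal matrix with $1$ in position $(k,k)$ and $0$ elsewhere, $w_k(\mathbf{v})=\frac{\mathbf{v}^T\mathbf{E}_k\mathbf{v}}{\mathbf{v}^T\mathbf{v}}=\frac{v_k^2}{\|\mathbf{v}\|^2}$, $C_k(\bar{\mathbf{f}},\mathbf{v})=w_k(\mathbf{v})S(\bar{\mathbf{f}})$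 for $k=1,\dots,K$ (common-rate portions of unicast messages) and $C_{\mathrm{mc}}(\bar{\mathbf{f}},\mathbf{v})=w_{K+1}(\mathbf{v})S(\bar{\mathbf{f}})$ (multicast common-rate portion). Objective: $f(\bar{\mathbf{f}},\mathbf{v})=\sum_{j=1}^K\big(R_{\mathrm{target},j}-\bar R_{p,j}(\bar{\mathbf{f}})-C_j(\bar{\mathbf{f}},\mathbf{v})\big)^2+\eta_{\mathrm{mc}}\big(R_{\mathrm{target,mc}}-C_{\mathrm{mc}}(\bar{\mathbf{f}},\mathbf{v})\big)^2$. Scalars: $\lambda_{\mathrm{num}}(\bar{\mathbf{f}},\mathbf{v})=\prod_{j=1}^K\exp\big(-(R_{\mathrm{target},j}-\bar R_{p,j}-C_j)^2\big)$, $\lambda_{\mathrm{den}}(\bar{\mathbf{f}},\mathbf{v})=\exp\big(\eta_{\mathrm{mc}}(R_{\mathrm{target,mc}}-C_{\mathrm{mc}})^2\big)$, $\lambda(\bar{\mathbf{f}},\mathbf{v})=\lambda_{\mathrm{num}}/\lambda_{\mathrm{den}}=\exp(-f(\bar{\mathbf{f}},\mathbf{v}))$. $\nabla_{\bar{\mathbf{f}}^*}$ denotes the Wirtinger gradient with respect to the complex conjugate of $\bar{\mathbf{f}}$ (its vanishing is equivalent to vanishing of the real gradient with respect to the real and imaginary parts of $\bar{\mathbf{f}}$). *)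

theory Defs
  imports Complex_Main "Jordan_Normal_Form.Matrix"
begin

(* Users are indexed k = 1..K; the K+1 diagonal blocks
   of size Nt x Nt are indexed 0..K (block 0 = first block = common stream,
   block k = (k+1)-th block = private stream of user k). *)
record sysp =
  K :: nat
  Nt :: nat
  av :: "nat \<Rightarrow> complex vec"      (* a_k, k = 1..K, each of dimension Nt *)
  gam :: "nat \<Rightarrow> real"
  sig2 :: real
  Pw :: real
  alpha :: real
  eta_mc :: real
  Rt :: "nat \<Rightarrow> real"
  Rmc :: real

definition dimn :: "sysp \<Rightarrow> nat" where
  "dimn p = Nt p * (K p + 1)"

definition blkdiag_sel :: "sysp \<Rightarrow> nat set \<Rightarrow> complex mat \<Rightarrow> complex mat" where
  "blkdiag_sel p S M = mat (dimn p) (dimn p) (\<lambda>(i, j).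
     if i div Nt p = j div Nt p \<and> i div Nt p \<in> S then M $$ (i mod Nt p, j mod Nt p) else 0)"

definition gram :: "sysp \<Rightarrow> nat \<Rightarrow> complex mat" where
  "gram p k = complex_of_real (gam p k) \<cdot>\<^sub>m
     mat (Nt p) (Nt p) (\<lambda>(r, s). av p k $ r * cnj (av p k $ s))"

definition noise :: "sysp \<Rightarrow> complex mat" where
  "noise p = complex_of_real (sig2 p / Pw p) \<cdot>\<^sub>m 1\<^sub>m (dimn p)"

definition Ac :: "sysp \<Rightarrow> nat \<Rightarrow> complex mat" where
  "Ac p k = blkdiag_sel p {0..K p} (gram p k) + noise p"

definition Bc :: "sysp \<Rightarrow> nat \<Rightarrow> complex mat" where
  "Bc p k = Ac p k - blkdiag_sel p {0} (gram p k)"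

definition Ap :: "sysp \<Rightarrow> nat \<Rightarrow> complex mat" where
  "Ap p k = blkdiag_sel p {1..K p} (gram p k) + noise p"

definition Bp :: "sysp \<Rightarrow> nat \<Rightarrow> complex mat" where
  "Bp p k = Ap p k - blkdiag_sel p {k} (gram p k)"

(* quadratic form f^H M f (real for Hermitian M) *)
definition qf :: "complex mat \<Rightarrow> complex vec \<Rightarrow> real" where
  "qf M f = Re ((M *\<^sub>v f) \<bullet>c f)"

definition Rc :: "sysp \<Rightarrow> nat \<Rightarrow> complex vec \<Rightarrow> real" where
  "Rc p k f = log 2 (qf (Ac p k) f / qf (Bc p k) f)"

definition Rp :: "sysp \<Rightarrow> nat \<Rightarrow> complex vec \<Rightarrow> real" where
  "Rp p k f = log 2 (qf (Ap p k) f / qf (Bp p k) f)"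

definition Ssm :: "sysp \<Rightarrow> complex vec \<Rightarrow> real" where
  "Ssm p f = - alpha p * ln ((1 / real (K p)) * (\<Sum>i = 1..K p. exp (- Rc p i f / alpha p)))"

definition piw :: "sysp \<Rightarrow> nat \<Rightarrow> complex vec \<Rightarrow> real" where
  "piw p i f = exp (- Rc p i f / alpha p) / (\<Sum>l = 1..K p. exp (- Rc p l f / alpha p))"

definition msum :: "nat \<Rightarrow> (nat \<Rightarrow> complex mat) \<Rightarrow> nat set \<Rightarrow> complex mat" where
  "msum n F I = mat n n (\<lambda>(i, j). \<Sum>l\<in>I. F l $$ (i, j))"

definition sc :: "real \<Rightarrow> complex mat \<Rightarrow> complex mat" where
  "sc x M = complex_of_real x \<cdot>\<^sub>m M"

definition LA :: "sysp \<Rightarrow> complex vec \<Rightarrow> complex mat" where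
  "LA p f = msum (dimn p) (\<lambda>i. sc (piw p i f / qf (Ac p i) f) (Ac p i)) {1..K p}"

definition LB :: "sysp \<Rightarrow> complex vec \<Rightarrow> complex mat" where
  "LB p f = msum (dimn p) (\<lambda>i. sc (piw p i f / qf (Bc p i) f) (Bc p i)) {1..K p}"

(* w_k(v) = v_k^2 / ||v||^2, k = 1..K+1 (v stored 0-based) *)
definition wk :: "real vec \<Rightarrow> nat \<Rightarrow> real" where
  "wk v k = (v $ (k - 1))^2 / (v \<bullet> v)"

definition Cj :: "sysp \<Rightarrow> complex vec \<Rightarrow> real vec \<Rightarrow> nat \<Rightarrow> real" where
  "Cj p f v k = wk v k * Ssm p f"

definition Cmc :: "sysp \<Rightarrow> complex vec \<Rightarrow> real vec \<Rightarrow> real" where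
  "Cmc p f v = wk v (K p + 1) * Ssm p f"

definition obj :: "sysp \<Rightarrow> complex vec \<Rightarrow> real vec \<Rightarrow> real" where
  "obj p f v = (\<Sum>j = 1..K p. (Rt p j - Rp p j f - Cj p f v j)^2)
      + eta_mc p * (Rmc p - Cmc p f v)^2"

definition lam_num :: "sysp \<Rightarrow> complex vec \<Rightarrow> real vec \<Rightarrow> real" where
  "lam_num p f v = (\<Prod>j = 1..K p. exp (- ((Rt p j - Rp p j f - Cj p f v j)^2)))"

definition lam_den :: "sysp \<Rightarrow> complex vec \<Rightarrow> real vec \<Rightarrow> real" where
  "lam_den p f v = exp (eta_mc p * (Rmc p - Cmc p f v)^2)"

definition lam :: "sysp \<Rightarrow> complex vec \<Rightarrow> real vec \<Rightarrow> real" where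
  "lam p f v = lam_num p f v / lam_den p f v"

definition Amat :: "sysp \<Rightarrow> complex vec \<Rightarrow> real vec \<Rightarrow> complex mat" where
  "Amat p f v = sc (lam_num p f v)
     (msum (dimn p) (\<lambda>j.
         sc (Rt p j) (sc (1 / qf (Ap p j) f) (Ap p j) + sc (wk v j) (LA p f))
       + sc (Rp p j f / qf (Bp p j) f) (Bp p j)
       + sc (wk v j * Cj p f v j) (LB p f)
       + sc (wk v j * Rp p j f) (LB p f)
       + sc (Cj p f v j / qf (Bp p j) f) (Bp p j)) {1..K p}
      + sc (eta_mc p) (sc (Rmc p * wk v (K p + 1)) (LA p f)
                      + sc (wk v (K p + 1) * Cmc p f v) (LB p f)))"

definition Bmat :: "sysp \<Rightarrow> complex vec \<Rightarrow> real vec \<Rightarrow> complex mat" where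
  "Bmat p f v = sc (lam_den p f v)
     (msum (dimn p) (\<lambda>j.
         sc (Rt p j) (sc (1 / qf (Bp p j) f) (Bp p j) + sc (wk v j) (LB p f))
       + sc (Rp p j f / qf (Ap p j) f) (Ap p j)
       + sc (wk v j * Cj p f v j) (LA p f)
       + sc (wk v j * Rp p j f) (LA p f)
       + sc (Cj p f v j / qf (Ap p j) f) (Ap p j)) {1..K p}
      + sc (eta_mc p) (sc (Rmc p * wk v (K p + 1)) (LB p f)
                      + sc (wk v (K p + 1) * Cmc p f v) (LA p f)))"

definition deriv0 :: "(real \<Rightarrow> real) \<Rightarrow> real" where
  "deriv0 g = (THE D. (g has_real_derivative D) (at 0))"

definition inv_mat :: "complex mat \<Rightarrow> complex mat" where
  "inv_mat B = (SOME C. inverts_mat B C \<and> inverts_mat C B)"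

(* Wirtinger gradient w.r.t. the conjugate of x of a real-valued function F on C^n:
   component m is (1/2)(dF/dRe x_m + i dF/dIm x_m) *)
definition wgrad_conj :: "nat \<Rightarrow> (complex vec \<Rightarrow> real) \<Rightarrow> complex vec \<Rightarrow> complex vec" where
  "wgrad_conj n F x = vec n (\<lambda>m.
     (complex_of_real (deriv0 (\<lambda>t. F (x + complex_of_real t \<cdot>\<^sub>v unit_vec n m)))
      + \<i> * complex_of_real (deriv0 (\<lambda>t. F (x + (\<i> * complex_of_real t) \<cdot>\<^sub>v unit_vec n m)))) / 2)"

end

theory Submission
  imports Defs
begin

text \<open>Every rate is the log-ratio of two Hermitian quadratic forms that are positive definite thanks
  to the noise term, and the smoothed minimum is a log-sum-exp of such rates. Hence the derivative of
  the objective along any direction d is a real linear functional Re (z \<bullet>c d), and the Wirtinger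
  gradient is z / 2. Differentiating and grouping the terms by the residuals of the rate targets gives
  z = -(4 / ln 2) (A f / lambda_num - B f / lambda_den), so stationarity means A f = lambda B f,
  which for invertible B is the stated eigenvector equation.\<close>

definition sesq_form :: "nat \<Rightarrow> complex mat \<Rightarrow> complex vec \<Rightarrow> complex vec \<Rightarrow> complex" where
  "sesq_form n M x y = (\<Sum>i<n. \<Sum>k<n. M $$ (i, k) * x $ k * cnj (y $ i))"

definition hermitian_mat :: "nat \<Rightarrow> complex mat \<Rightarrow> bool" where
  "hermitian_mat n M \<longleftrightarrow> (\<forall>i<n. \<forall>k<n. M $$ (i, k) = cnj (M $$ (k, i)))"

lemma sesq_form_eq_cscalar_prod:
  assumes "M \<in> carrier_mat n n" "x \<in> carrier_vec n" "y \<in> carrier_vec n"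
  shows "sesq_form n M x y = (M *\<^sub>v x) \<bullet>c y"
  using assms unfolding sesq_form_def
  by (simp add: mult_mat_vec_def scalar_prod_def row_def sum_distrib_right lessThan_atLeast0)

lemma qf_eq_sesq_form:
  assumes "M \<in> carrier_mat n n" "x \<in> carrier_vec n"
  shows "qf M x = Re (sesq_form n M x x)"
  using assms by (simp add: qf_def sesq_form_eq_cscalar_prod)

lemma sc_carrier [simp]: "M \<in> carrier_mat n n \<Longrightarrow> sc c M \<in> carrier_mat n n"
  unfolding sc_def by simp

lemma msum_carrier [simp]: "msum n F I \<in> carrier_mat n n"
  unfolding msum_def by simp

lemma sesq_form_add:
  "M \<in> carrier_mat n n \<Longrightarrow> N \<in> carrier_mat n n \<Longrightarrow>
   sesq_form n (M + N) x y = sesq_form n M x y + sesq_form n N x y"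
  unfolding sesq_form_def by (simp add: algebra_simps sum.distrib)

lemma sesq_form_sc:
  "M \<in> carrier_mat n n \<Longrightarrow> sesq_form n (sc c M) x y = complex_of_real c * sesq_form n M x y"
  unfolding sesq_form_def sc_def by (simp add: sum_distrib_left mult_ac)

lemma sesq_form_msum: "sesq_form n (msum n F I) x y = (\<Sum>l\<in>I. sesq_form n (F l) x y)"
proof -
  have "sesq_form n (msum n F I) x y = (\<Sum>i<n. \<Sum>k<n. \<Sum>l\<in>I. F l $$ (i, k) * x $ k * cnj (y $ i))"
    by (simp add: sesq_form_def msum_def sum_distrib_right)
  also have "\<dots> = (\<Sum>l\<in>I. \<Sum>i<n. \<Sum>k<n. F l $$ (i, k) * x $ k * cnj (y $ i))"
    by (simp only: sum.swap[of _ I])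
  finally show ?thesis by (simp add: sesq_form_def)
qed

lemma sesq_form_line:
  assumes "x \<in> carrier_vec n" "d \<in> carrier_vec n"
  shows "sesq_form n M (x + complex_of_real t \<cdot>\<^sub>v d) (x + complex_of_real t \<cdot>\<^sub>v d)
     = sesq_form n M x x + complex_of_real t * (sesq_form n M x d + sesq_form n M d x)
       + (complex_of_real t)\<^sup>2 * sesq_form n M d d"
  using assms unfolding sesq_form_def
  by (simp add: algebra_simps power2_eq_square sum.distrib sum_distrib_left)

lemma sesq_form_hermitian_swap:
  assumes "hermitian_mat n M"
  shows "sesq_form n M y x = cnj (sesq_form n M x y)"
proof -
  have "cnj (sesq_form n M x y) = (\<Sum>i<n. \<Sum>k<n. cnj (M $$ (i, k)) * cnj (x $ k) * y $ i)"
    unfolding sesq_form_def by (simp add: cnj_sum)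
  also have "\<dots> = (\<Sum>i<n. \<Sum>k<n. M $$ (k, i) * cnj (x $ k) * y $ i)"
    using assms unfolding hermitian_mat_def by (intro sum.cong refl) (metis complex_cnj_cnj lessThan_iff)
  also have "\<dots> = sesq_form n M y x"
    unfolding sesq_form_def by (subst sum.swap) (simp add: mult_ac)
  finally show ?thesis by simp
qed

lemma qf_line_has_real_derivative:
  assumes "M \<in> carrier_mat n n" "hermitian_mat n M" "x \<in> carrier_vec n" "d \<in> carrier_vec n"
  shows "((\<lambda>t. qf M (x + complex_of_real t \<cdot>\<^sub>v d)) has_real_derivative
           2 * Re (sesq_form n M x d)) (at 0)"
proof -
  have "qf M (x + complex_of_real t \<cdot>\<^sub>v d) = Re (sesq_form n M x x)
      + t * (2 * Re (sesq_form n M x d)) + t\<^sup>2 * Re (sesq_form n M d d)" for t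
    using assms sesq_form_hermitian_swap[OF assms(2), of d x]
    by (simp add: qf_eq_sesq_form[of M n] sesq_form_line power2_eq_square)
  then show ?thesis
    by (auto intro!: derivative_eq_intros)
qed

lemma sesq_form_weighted_outer:
  assumes "\<And>i k. i < n \<Longrightarrow> k < n \<Longrightarrow> M $$ (i, k) = (\<Sum>b\<in>B. complex_of_real (c b) * u b i * cnj (u b k))"
  shows "Re (sesq_form n M x x) = (\<Sum>b\<in>B. c b * (cmod (\<Sum>k<n. cnj (u b k) * x $ k))\<^sup>2)"
proof -
  define w where "w b = (\<Sum>k<n. cnj (u b k) * x $ k)" for b
  have "sesq_form n M x x = (\<Sum>b\<in>B. complex_of_real (c b) * (w b * cnj (w b)))"
    using assms unfolding sesq_form_def w_def
    by (simp add: cnj_sum sum_distrib_left sum_distrib_right mult_ac sum.swap[of _ B])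
  also have "\<dots> = complex_of_real (\<Sum>b\<in>B. c b * (cmod (w b))\<^sup>2)"
    by (simp only: of_real_sum of_real_mult complex_norm_square)
  finally show ?thesis by (simp add: w_def)
qed

lemma blkdiag_sel_carrier [simp]: "blkdiag_sel p S M \<in> carrier_mat (dimn p) (dimn p)"
  unfolding blkdiag_sel_def by simp

lemma noise_carrier [simp]: "noise p \<in> carrier_mat (dimn p) (dimn p)"
  unfolding noise_def by simp

lemma blkdiag_sel_dim [simp]:
  "dim_row (blkdiag_sel p S M) = dimn p" "dim_col (blkdiag_sel p S M) = dimn p"
  unfolding blkdiag_sel_def by simp_all

lemma noise_dim [simp]: "dim_row (noise p) = dimn p" "dim_col (noise p) = dimn p"
  unfolding noise_def by simp_all

lemma blkdiag_sel_index:
  "i < dimn p \<Longrightarrow> j < dimn p \<Longrightarrow> blkdiag_sel p S M $$ (i, j) =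
     (if i div Nt p = j div Nt p \<and> i div Nt p \<in> S then M $$ (i mod Nt p, j mod Nt p) else 0)"
  unfolding blkdiag_sel_def by simp

lemma gram_index:
  "r < Nt p \<Longrightarrow> s < Nt p \<Longrightarrow>
   gram p k $$ (r, s) = complex_of_real (gam p k) * av p k $ r * cnj (av p k $ s)"
  unfolding gram_def by simp

lemma noise_index:
  "i < dimn p \<Longrightarrow> j < dimn p \<Longrightarrow>
   noise p $$ (i, j) = (if i = j then complex_of_real (sig2 p / Pw p) else 0)"
  unfolding noise_def by simp

lemma dimn_div_mod_bounds:
  assumes "i < dimn p"
  shows "i mod Nt p < Nt p" "i div Nt p \<le> K p"
proof -
  have i: "i < (K p + 1) * Nt p"
    using assms by (simp add: dimn_def mult.commute)
  then have "Nt p > 0"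
    by (cases "Nt p") simp_all
  then show "i mod Nt p < Nt p"
    by simp
  show "i div Nt p \<le> K p"
    using less_mult_imp_div_less[OF i] by simp
qed

text \<open>Each diagonal block is the rank-one matrix gamma a a^H, so the selected block diagonal is a
  nonnegative combination of outer products of zero-padded copies of a.\<close>

lemma blkdiag_sel_gram_outer:
  assumes "i < dimn p" "j < dimn p"
  shows "blkdiag_sel p S (gram p k) $$ (i, j) = (\<Sum>b\<in>S \<inter> {..K p}. complex_of_real (gam p k) *
           (if i div Nt p = b then av p k $ (i mod Nt p) else 0) *
           cnj (if j div Nt p = b then av p k $ (j mod Nt p) else 0))"
proof -
  let ?x = "av p k $ (i mod Nt p)" and ?y = "av p k $ (j mod Nt p)"
  have "(\<Sum>b\<in>S \<inter> {..K p}. complex_of_real (gam p k) * (if i div Nt p = b then ?x else 0) *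
           cnj (if j div Nt p = b then ?y else 0))
      = (\<Sum>b\<in>S \<inter> {..K p}. if b = i div Nt p then
           (if j div Nt p = i div Nt p then complex_of_real (gam p k) * ?x * cnj ?y else 0) else 0)"
    by (intro sum.cong) auto
  also have "\<dots> = (if i div Nt p = j div Nt p \<and> i div Nt p \<in> S
                  then complex_of_real (gam p k) * ?x * cnj ?y else 0)"
    using dimn_div_mod_bounds(2)[OF assms(1)] by (auto simp: sum.delta')
  finally show ?thesis
    using assms dimn_div_mod_bounds(1) by (auto simp: blkdiag_sel_index gram_index)
qed

lemma qf_blkdiag_sel_gram_nonneg:
  assumes "gam p k \<ge> 0" "f \<in> carrier_vec (dimn p)"
  shows "qf (blkdiag_sel p S (gram p k)) f \<ge> 0"
  using assms blkdiag_sel_gram_outer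
  by (simp add: qf_eq_sesq_form[of _ "dimn p"] sesq_form_weighted_outer[where c = "\<lambda>_. gam p k"] sum_nonneg)

lemma qf_noise:
  assumes "f \<in> carrier_vec (dimn p)"
  shows "qf (noise p) f = sig2 p / Pw p * Re (f \<bullet>c f)"
proof -
  have "sesq_form (dimn p) (noise p) f f = complex_of_real (sig2 p / Pw p) * (f \<bullet>c f)"
    using assms unfolding sesq_form_def scalar_prod_def
    by (simp add: noise_index sum_distrib_left mult_ac if_distrib if_distribR sum.delta
        lessThan_atLeast0 cong: if_cong)
  then show ?thesis
    using assms by (simp add: qf_eq_sesq_form[of _ "dimn p"])
qed

lemma qf_blkdiag_sel_gram_noise_pos:
  assumes "gam p k \<ge> 0" "sig2 p > 0" "Pw p > 0"
    and "f \<in> carrier_vec (dimn p)" "f \<noteq> 0\<^sub>v (dimn p)"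
  shows "qf (blkdiag_sel p S (gram p k) + noise p) f > 0"
proof -
  have "f \<bullet>c f > 0"
    using assms(4,5) by simp
  then have "qf (noise p) f > 0"
    using assms(2-4) by (simp add: qf_noise less_complex_def)
  then show ?thesis
    using assms qf_blkdiag_sel_gram_nonneg[OF assms(1,4), of S]
    by (simp add: qf_eq_sesq_form[of _ "dimn p"] sesq_form_add)
qed

lemma hermitian_blkdiag_sel_gram_noise: "hermitian_mat (dimn p) (blkdiag_sel p S (gram p k) + noise p)"
  unfolding hermitian_mat_def
  by (auto simp: blkdiag_sel_index gram_index noise_index dimn_div_mod_bounds(1))

lemma rate_matrix_cases:
  assumes "k \<in> {1..K p}" "M \<in> {Ac p k, Bc p k, Ap p k, Bp p k}"
  obtains S where "M = blkdiag_sel p S (gram p k) + noise p"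
proof -
  have "Bc p k = blkdiag_sel p ({0..K p} - {0}) (gram p k) + noise p"
    unfolding Bc_def Ac_def by (rule eq_matI) (auto simp: blkdiag_sel_index)
  moreover have "Bp p k = blkdiag_sel p ({1..K p} - {k}) (gram p k) + noise p"
    using assms(1) unfolding Bp_def Ap_def by (intro eq_matI) (auto simp: blkdiag_sel_index)
  ultimately show ?thesis
    using assms(2) that unfolding Ac_def Ap_def by blast
qed

lemma rate_matrices_carrier [simp]:
  "Ac p k \<in> carrier_mat (dimn p) (dimn p)" "Bc p k \<in> carrier_mat (dimn p) (dimn p)"
  "Ap p k \<in> carrier_mat (dimn p) (dimn p)" "Bp p k \<in> carrier_mat (dimn p) (dimn p)"
  by (simp_all add: Ac_def Bc_def Ap_def Bp_def minus_carrier_mat)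

lemma LA_LB_carrier [simp]:
  "LA p f \<in> carrier_mat (dimn p) (dimn p)" "LB p f \<in> carrier_mat (dimn p) (dimn p)"
  unfolding LA_def LB_def by simp_all

lemma Amat_Bmat_carrier [simp]:
  "Amat p f v \<in> carrier_mat (dimn p) (dimn p)" "Bmat p f v \<in> carrier_mat (dimn p) (dimn p)"
  unfolding Amat_def Bmat_def by simp_all

lemma lam_num_pos: "lam_num p f v > 0"
  unfolding lam_num_def by (intro prod_pos) simp

lemma lam_den_pos: "lam_den p f v > 0"
  unfolding lam_den_def by simp

lemma has_real_derivative_log_ratio:
  assumes "(a has_real_derivative a') (at 0)" "(b has_real_derivative b') (at 0)"
    and "a 0 > 0" "b 0 > 0"
  shows "((\<lambda>t. log 2 (a t / b t)) has_real_derivative (a' / a 0 - b' / b 0) / ln 2) (at 0)"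
proof -
  have "((\<lambda>t. log 2 (a t / b t)) has_real_derivative
      1 / (ln 2 * (a 0 / b 0)) * ((a' * b 0 - a 0 * b') / (b 0 * b 0))) (at 0)"
    using assms by (auto intro!: derivative_eq_intros)
  moreover have "1 / (ln 2 * (a 0 / b 0)) * ((a' * b 0 - a 0 * b') / (b 0 * b 0)) = (a' / a 0 - b' / b 0) / ln 2"
    using assms(3,4) by (simp add: field_simps)
  ultimately show ?thesis by simp
qed

lemma has_real_derivative_soft_min:
  assumes R: "\<And>i. i \<in> I \<Longrightarrow> (R i has_real_derivative R' i) (at 0)"
    and "al > 0" "c > 0" "finite I" "I \<noteq> {}"
  shows "((\<lambda>t. - al * ln (c * (\<Sum>i\<in>I. exp (- R i t / al)))) has_real_derivative
      (\<Sum>i\<in>I. exp (- R i 0 / al) / (\<Sum>l\<in>I. exp (- R l 0 / al)) * R' i)) (at 0)"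
proof -
  define E where "E i = exp (- R i 0 / al)" for i
  define S where "S = sum E I"
  define X where "X = (\<Sum>i\<in>I. E i * R' i)"
  have S_pos: "S > 0"
    unfolding S_def E_def using assms by (intro sum_pos) auto
  have "((\<lambda>t. - al * ln (c * (\<Sum>i\<in>I. exp (- R i t / al)))) has_real_derivative
      - al * ((c * (\<Sum>i\<in>I. E i * (- R' i / al))) / (c * S))) (at 0)"
    using assms S_pos unfolding S_def E_def by (auto intro!: derivative_eq_intros DERIV_sum R)
  moreover have "(\<Sum>i\<in>I. E i * (- R' i / al)) = - X / al"
    unfolding X_def by (simp add: sum_divide_distrib sum_negf)
  then have "- al * ((c * (\<Sum>i\<in>I. E i * (- R' i / al))) / (c * S)) = X / S"
    using assms(2,3) S_pos by (simp add: field_simps)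
  moreover have "X / S = (\<Sum>i\<in>I. E i / S * R' i)"
    unfolding X_def by (simp add: sum_divide_distrib mult_ac)
  ultimately show ?thesis
    unfolding S_def E_def by simp
qed

lemma has_real_derivative_residual_objective:
  assumes "\<And>j. j \<in> I \<Longrightarrow> (P j has_real_derivative c * X j) (at 0)"
    and "(S has_real_derivative c * Y) (at 0)" "finite I"
  shows "((\<lambda>t. (\<Sum>j\<in>I. (r j - P j t - w j * S t)\<^sup>2) + e * (rm - wm * S t)\<^sup>2) has_real_derivative
     - 2 * c * ((\<Sum>j\<in>I. (r j - P j 0 - w j * S 0) * (X j + w j * Y))
                + e * (rm - wm * S 0) * wm * Y)) (at 0)"
proof -
  have "((\<lambda>t. (\<Sum>j\<in>I. (r j - P j t - w j * S t)\<^sup>2) + e * (rm - wm * S t)\<^sup>2) has_real_derivative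
     (\<Sum>j\<in>I. 2 * (r j - P j 0 - w j * S 0) * (- (c * X j) - w j * (c * Y)))
      + e * (2 * (rm - wm * S 0) * (- wm * (c * Y)))) (at 0)"
    using assms by (auto intro!: derivative_eq_intros DERIV_sum simp: algebra_simps)
  then show ?thesis
    by (simp add: sum_distrib_left algebra_simps)
qed

lemma deriv0_eq: "(g has_real_derivative D) (at 0) \<Longrightarrow> deriv0 g = D"
  unfolding deriv0_def by (rule the_equality) (auto intro: DERIV_unique)

lemma cscalar_prod_smult_unit_vec:
  "z \<in> carrier_vec n \<Longrightarrow> m < n \<Longrightarrow> z \<bullet>c (c \<cdot>\<^sub>v unit_vec n m) = cnj c * z $ m"
  by (simp add: conjugate_smult_vec scalar_prod_def unit_vec_def conjugate_vec_def
      sum.delta' if_distrib if_distribR cong: if_cong)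

lemma wgrad_conj_eq:
  assumes z: "z \<in> carrier_vec n"
    and D: "\<And>d. d \<in> carrier_vec n \<Longrightarrow>
      ((\<lambda>t. F (x + complex_of_real t \<cdot>\<^sub>v d)) has_real_derivative Re (z \<bullet>c d)) (at 0)"
  shows "wgrad_conj n F x = (1 / 2) \<cdot>\<^sub>v z"
proof (rule eq_vecI)
  fix m
  assume "m < dim_vec ((1 / 2) \<cdot>\<^sub>v z)"
  then have m: "m < n" using z by simp
  let ?e = "unit_vec n m"
  have "deriv0 (\<lambda>t. F (x + complex_of_real t \<cdot>\<^sub>v ?e)) = Re (z $ m)"
    using deriv0_eq[OF D] z m cscalar_prod_smult_unit_vec[of z n m 1] by simp
  moreover have "deriv0 (\<lambda>t. F (x + complex_of_real t \<cdot>\<^sub>v (\<i> \<cdot>\<^sub>v ?e))) = Im (z $ m)"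
    using deriv0_eq[OF D] z m by (simp add: cscalar_prod_smult_unit_vec)
  ultimately show "wgrad_conj n F x $ m = ((1 / 2) \<cdot>\<^sub>v z) $ m"
    using z m by (simp add: wgrad_conj_def smult_smult_assoc mult.commute complex_eq_iff)
qed (use z in \<open>simp add: wgrad_conj_def\<close>)

lemma inv_mat_inverse:
  assumes "B \<in> carrier_mat n n" "invertible_mat B"
  shows "inv_mat B \<in> carrier_mat n n" "B * inv_mat B = 1\<^sub>m n" "inv_mat B * B = 1\<^sub>m n"
proof -
  have "inverts_mat B (inv_mat B) \<and> inverts_mat (inv_mat B) B"
    using assms(2) unfolding inv_mat_def invertible_mat_def by (metis (mono_tags) someI_ex)
  then have l: "B * inv_mat B = 1\<^sub>m n" and r: "inv_mat B * B = 1\<^sub>m (dim_row (inv_mat B))"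
    using assms(1) unfolding inverts_mat_def by auto
  have "dim_col (inv_mat B) = n" "dim_row (inv_mat B) = n"
    using arg_cong[OF l, of dim_col] arg_cong[OF r, of dim_col] assms(1) by auto
  then show "inv_mat B \<in> carrier_mat n n" "B * inv_mat B = 1\<^sub>m n" "inv_mat B * B = 1\<^sub>m n"
    using l r by auto
qed

lemma inv_mat_mult_vec_eq_iff:
  assumes B: "B \<in> carrier_mat n n" "invertible_mat B"
    and y: "y \<in> carrier_vec n" and x: "x \<in> carrier_vec n"
  shows "inv_mat B *\<^sub>v y = c \<cdot>\<^sub>v x \<longleftrightarrow> y = c \<cdot>\<^sub>v (B *\<^sub>v x)"
proof
  assume "inv_mat B *\<^sub>v y = c \<cdot>\<^sub>v x"
  then have "B *\<^sub>v (inv_mat B *\<^sub>v y) = c \<cdot>\<^sub>v (B *\<^sub>v x)"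
    using B x by (simp add: mult_mat_vec)
  moreover have "B *\<^sub>v (inv_mat B *\<^sub>v y) = y"
    using assoc_mult_mat_vec[OF B(1) inv_mat_inverse(1)[OF B] y] inv_mat_inverse(2)[OF B] y
    by simp
  ultimately show "y = c \<cdot>\<^sub>v (B *\<^sub>v x)"
    by simp
next
  assume "y = c \<cdot>\<^sub>v (B *\<^sub>v x)"
  then have "inv_mat B *\<^sub>v y = c \<cdot>\<^sub>v ((inv_mat B * B) *\<^sub>v x)"
    using inv_mat_inverse(1)[OF B] B x by (simp add: mult_mat_vec)
  then show "inv_mat B *\<^sub>v y = c \<cdot>\<^sub>v x"
    using inv_mat_inverse[OF B] x by simp
qed

lemma smult_minus_eq_zero_vec_iff:
  fixes c :: "'a :: field"
  assumes "c \<noteq> 0" "x \<in> carrier_vec n" "y \<in> carrier_vec n"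
  shows "c \<cdot>\<^sub>v (x - y) = 0\<^sub>v n \<longleftrightarrow> x = y"
  using assms by (auto simp: vec_eq_iff)

context
  fixes p :: sysp and f :: "complex vec" and v :: "real vec"
  assumes K_pos: "K p \<ge> 1"
    and gam_pos: "\<And>k. k \<in> {1..K p} \<Longrightarrow> gam p k > 0"
    and noise_pos: "sig2 p > 0" "Pw p > 0"
    and alpha_pos: "alpha p > 0"
    and f: "f \<in> carrier_vec (dimn p)" "f \<noteq> 0\<^sub>v (dimn p)"
begin

text \<open>ell M d is half the derivative of qf M at f in direction d.\<close>

abbreviation ell :: "complex mat \<Rightarrow> complex vec \<Rightarrow> real" where
  "ell M d \<equiv> Re (sesq_form (dimn p) M f d)"

lemma line_at_0: "d \<in> carrier_vec (dimn p) \<Longrightarrow> f + (0 :: complex) \<cdot>\<^sub>v d = f"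
  using f(1) by (intro eq_vecI) auto

lemma rate_matrix_hermitian_pos:
  assumes "k \<in> {1..K p}" "M \<in> {Ac p k, Bc p k, Ap p k, Bp p k}"
  shows "hermitian_mat (dimn p) M" "qf M f > 0"
proof -
  obtain S where "M = blkdiag_sel p S (gram p k) + noise p"
    using rate_matrix_cases[OF assms] .
  then show "hermitian_mat (dimn p) M" "qf M f > 0"
    using hermitian_blkdiag_sel_gram_noise qf_blkdiag_sel_gram_noise_pos gam_pos[OF assms(1)]
      noise_pos f by auto
qed

lemma has_real_derivative_log_qf_ratio:
  assumes "k \<in> {1..K p}" "M \<in> {Ac p k, Bc p k, Ap p k, Bp p k}" "N \<in> {Ac p k, Bc p k, Ap p k, Bp p k}"
    and d: "d \<in> carrier_vec (dimn p)"
  shows "((\<lambda>t. log 2 (qf M (f + complex_of_real t \<cdot>\<^sub>v d) / qf N (f + complex_of_real t \<cdot>\<^sub>v d)))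
           has_real_derivative 2 / ln 2 * (ell M d / qf M f - ell N d / qf N f)) (at 0)"
proof -
  have "M \<in> carrier_mat (dimn p) (dimn p)" "N \<in> carrier_mat (dimn p) (dimn p)"
    using assms(2,3) by auto
  note qf_line = qf_line_has_real_derivative[OF this(1) _ f(1) d] qf_line_has_real_derivative[OF this(2) _ f(1) d]
  have "((\<lambda>t. log 2 (qf M (f + complex_of_real t \<cdot>\<^sub>v d) / qf N (f + complex_of_real t \<cdot>\<^sub>v d)))
           has_real_derivative (2 * ell M d / qf M f - 2 * ell N d / qf N f) / ln 2) (at 0)"
    using has_real_derivative_log_ratio[OF qf_line] rate_matrix_hermitian_pos[OF assms(1)] assms(2,3)
    by (simp add: line_at_0[OF d])
  then show ?thesis
    by (simp add: field_simps)
qed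

lemma has_real_derivative_Rc:
  "k \<in> {1..K p} \<Longrightarrow> d \<in> carrier_vec (dimn p) \<Longrightarrow>
   ((\<lambda>t. Rc p k (f + complex_of_real t \<cdot>\<^sub>v d)) has_real_derivative
     2 / ln 2 * (ell (Ac p k) d / qf (Ac p k) f - ell (Bc p k) d / qf (Bc p k) f)) (at 0)"
  unfolding Rc_def by (rule has_real_derivative_log_qf_ratio) auto

lemma has_real_derivative_Rp:
  "k \<in> {1..K p} \<Longrightarrow> d \<in> carrier_vec (dimn p) \<Longrightarrow>
   ((\<lambda>t. Rp p k (f + complex_of_real t \<cdot>\<^sub>v d)) has_real_derivative
     2 / ln 2 * (ell (Ap p k) d / qf (Ap p k) f - ell (Bp p k) d / qf (Bp p k) f)) (at 0)"
  unfolding Rp_def by (rule has_real_derivative_log_qf_ratio) auto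

lemma ell_LA: "ell (LA p f) d = (\<Sum>i\<in>{1..K p}. piw p i f * (ell (Ac p i) d / qf (Ac p i) f))"
  unfolding LA_def by (simp add: sesq_form_msum sesq_form_sc Re_sum)

lemma ell_LB: "ell (LB p f) d = (\<Sum>i\<in>{1..K p}. piw p i f * (ell (Bc p i) d / qf (Bc p i) f))"
  unfolding LB_def by (simp add: sesq_form_msum sesq_form_sc Re_sum)

lemma has_real_derivative_Ssm:
  assumes d: "d \<in> carrier_vec (dimn p)"
  shows "((\<lambda>t. Ssm p (f + complex_of_real t \<cdot>\<^sub>v d)) has_real_derivative
           2 / ln 2 * (ell (LA p f) d - ell (LB p f) d)) (at 0)"
proof -
  have "((\<lambda>t. Ssm p (f + complex_of_real t \<cdot>\<^sub>v d)) has_real_derivative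
      (\<Sum>i\<in>{1..K p}. piw p i f *
         (2 / ln 2 * (ell (Ac p i) d / qf (Ac p i) f - ell (Bc p i) d / qf (Bc p i) f)))) (at 0)"
    unfolding Ssm_def piw_def
    using has_real_derivative_soft_min[where R = "\<lambda>i t. Rc p i (f + complex_of_real t \<cdot>\<^sub>v d)"
        and I = "{1..K p}" and c = "1 / real (K p)", OF has_real_derivative_Rc[OF _ d] alpha_pos]
      K_pos by (simp add: line_at_0[OF d])
  moreover have "(\<Sum>i\<in>{1..K p}. piw p i f *
         (2 / ln 2 * (ell (Ac p i) d / qf (Ac p i) f - ell (Bc p i) d / qf (Bc p i) f)))
      = 2 / ln 2 * (ell (LA p f) d - ell (LB p f) d)"
    by (simp add: ell_LA ell_LB sum_distrib_left algebra_simps flip: sum_subtractf)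
  ultimately show ?thesis by simp
qed

text \<open>This is the identity that the definitions of A and B are designed for.\<close>

lemma ell_Amat_Bmat_residuals:
  "ell (Amat p f v) d / lam_num p f v - ell (Bmat p f v) d / lam_den p f v =
     (\<Sum>j\<in>{1..K p}. (Rt p j - Rp p j f - Cj p f v j) *
        (ell (Ap p j) d / qf (Ap p j) f - ell (Bp p j) d / qf (Bp p j) f
         + wk v j * (ell (LA p f) d - ell (LB p f) d)))
     + eta_mc p * (Rmc p - Cmc p f v) * wk v (K p + 1) * (ell (LA p f) d - ell (LB p f) d)"
proof -
  have A: "ell (Amat p f v) d / lam_num p f v =
     (\<Sum>j\<in>{1..K p}. Rt p j * (ell (Ap p j) d / qf (Ap p j) f + wk v j * ell (LA p f) d)
        + Rp p j f * (ell (Bp p j) d / qf (Bp p j) f) + wk v j * Cj p f v j * ell (LB p f) d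
        + wk v j * Rp p j f * ell (LB p f) d + Cj p f v j * (ell (Bp p j) d / qf (Bp p j) f))
     + eta_mc p * (Rmc p * wk v (K p + 1) * ell (LA p f) d + wk v (K p + 1) * Cmc p f v * ell (LB p f) d)"
    (is "_ = sum ?TA _ + ?mA")
    using lam_num_pos[of p f v] unfolding Amat_def
    by (simp add: sesq_form_msum sesq_form_sc sesq_form_add[of _ "dimn p"] Re_sum)
  have B: "ell (Bmat p f v) d / lam_den p f v =
     (\<Sum>j\<in>{1..K p}. Rt p j * (ell (Bp p j) d / qf (Bp p j) f + wk v j * ell (LB p f) d)
        + Rp p j f * (ell (Ap p j) d / qf (Ap p j) f) + wk v j * Cj p f v j * ell (LA p f) d
        + wk v j * Rp p j f * ell (LA p f) d + Cj p f v j * (ell (Ap p j) d / qf (Ap p j) f))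
     + eta_mc p * (Rmc p * wk v (K p + 1) * ell (LB p f) d + wk v (K p + 1) * Cmc p f v * ell (LA p f) d)"
    (is "_ = sum ?TB _ + ?mB")
    using lam_den_pos[of p f v] unfolding Bmat_def
    by (simp add: sesq_form_msum sesq_form_sc sesq_form_add[of _ "dimn p"] Re_sum)
  have residual: "Rt * (a + w * la) + R * b + w * C * lb + w * R * lb + C * b
      - (Rt * (b + w * lb) + R * a + w * C * la + w * R * la + C * a)
      = (Rt - R - C) * (a - b + w * (la - lb))" for Rt R C w a b la lb :: real
    by (simp add: algebra_simps)
  have "sum ?TA {1..K p} + ?mA - (sum ?TB {1..K p} + ?mB) = (\<Sum>j\<in>{1..K p}. ?TA j - ?TB j) + (?mA - ?mB)"
    by (simp add: sum_subtractf)
  also have "\<dots> = (\<Sum>j\<in>{1..K p}. (Rt p j - Rp p j f - Cj p f v j) *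
        (ell (Ap p j) d / qf (Ap p j) f - ell (Bp p j) d / qf (Bp p j) f
         + wk v j * (ell (LA p f) d - ell (LB p f) d)))
     + eta_mc p * (Rmc p - Cmc p f v) * wk v (K p + 1) * (ell (LA p f) d - ell (LB p f) d)"
    by (simp only: residual) (simp add: algebra_simps)
  finally show ?thesis
    unfolding A B .
qed

lemma has_real_derivative_obj:
  assumes d: "d \<in> carrier_vec (dimn p)"
  shows "((\<lambda>t. obj p (f + complex_of_real t \<cdot>\<^sub>v d) v) has_real_derivative
     - (4 / ln 2) * (ell (Amat p f v) d / lam_num p f v - ell (Bmat p f v) d / lam_den p f v)) (at 0)"
  using has_real_derivative_residual_objective[where P = "\<lambda>j t. Rp p j (f + complex_of_real t \<cdot>\<^sub>v d)"
      and I = "{1..K p}" and r = "Rt p" and w = "wk v" and e = "eta_mc p" and rm = "Rmc p"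
      and wm = "wk v (K p + 1)", OF has_real_derivative_Rp[OF _ d] has_real_derivative_Ssm[OF d]]
  unfolding obj_def ell_Amat_Bmat_residuals Cj_def Cmc_def
  by (simp add: line_at_0[OF d])

lemma wgrad_conj_obj:
  "wgrad_conj (dimn p) (\<lambda>g. obj p g v) f = complex_of_real (- 2 / (ln 2 * lam_num p f v)) \<cdot>\<^sub>v
     (Amat p f v *\<^sub>v f - complex_of_real (lam p f v) \<cdot>\<^sub>v (Bmat p f v *\<^sub>v f))"
proof -
  define c where "c = - 4 / (ln 2 * lam_num p f v)"
  define z where "z = complex_of_real c \<cdot>\<^sub>v (Amat p f v *\<^sub>v f - complex_of_real (lam p f v) \<cdot>\<^sub>v (Bmat p f v *\<^sub>v f))"
  have Af: "Amat p f v *\<^sub>v f \<in> carrier_vec (dimn p)" and Bf: "Bmat p f v *\<^sub>v f \<in> carrier_vec (dimn p)"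
    using mult_mat_vec_carrier[OF Amat_Bmat_carrier(1) f(1)]
      mult_mat_vec_carrier[OF Amat_Bmat_carrier(2) f(1)] by simp_all
  have z: "z \<in> carrier_vec (dimn p)"
    unfolding z_def using Af Bf by simp
  have Re_z: "Re (z \<bullet>c d) = - (4 / ln 2) * (ell (Amat p f v) d / lam_num p f v - ell (Bmat p f v) d / lam_den p f v)"
    if d: "d \<in> carrier_vec (dimn p)" for d
  proof -
    have "z \<bullet>c d = complex_of_real c * (sesq_form (dimn p) (Amat p f v) f d
        - complex_of_real (lam p f v) * sesq_form (dimn p) (Bmat p f v) f d)"
      unfolding z_def using f(1) d Af Bf
      by (simp add: sesq_form_eq_cscalar_prod minus_scalar_prod_distrib[of _ "dimn p"]
          smult_scalar_prod_distrib[of _ "dimn p"])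
    then have "Re (z \<bullet>c d) = c * (ell (Amat p f v) d - lam p f v * ell (Bmat p f v) d)"
      by simp
    then show ?thesis
      using lam_num_pos[of p f v] lam_den_pos[of p f v]
      by (simp add: c_def lam_def field_simps)
  qed
  have "wgrad_conj (dimn p) (\<lambda>g. obj p g v) f = (1 / 2) \<cdot>\<^sub>v z"
    using has_real_derivative_obj by (intro wgrad_conj_eq[OF z]) (simp only: Re_z)
  then show ?thesis
    by (simp add: z_def c_def smult_smult_assoc)
qed

lemma wgrad_conj_obj_eq_0_iff:
  "wgrad_conj (dimn p) (\<lambda>g. obj p g v) f = 0\<^sub>v (dimn p)
     \<longleftrightarrow> Amat p f v *\<^sub>v f = complex_of_real (lam p f v) \<cdot>\<^sub>v (Bmat p f v *\<^sub>v f)"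
  unfolding wgrad_conj_obj
proof (rule smult_minus_eq_zero_vec_iff)
  show "complex_of_real (- 2 / (ln 2 * lam_num p f v)) \<noteq> 0"
    using lam_num_pos[of p f v] by simp
qed (use mult_mat_vec_carrier[OF Amat_Bmat_carrier(1) f(1)]
      mult_mat_vec_carrier[OF Amat_Bmat_carrier(2) f(1)] in simp_all)

end

theorem lemma1:
  fixes p :: sysp and fb :: "complex vec" and v :: "real vec"
  assumes "K p \<ge> 1" and "Nt p \<ge> 1"
    and "\<And>k. k \<in> {1..K p} \<Longrightarrow> av p k \<in> carrier_vec (Nt p)"
    and "\<And>k. k \<in> {1..K p} \<Longrightarrow> gam p k > 0"
    and "sig2 p > 0" and "Pw p > 0" and "alpha p > 0" and "eta_mc p > 0"
    and "v \<in> carrier_vec (K p + 1)" and "v \<noteq> 0\<^sub>v (K p + 1)"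
    and "fb \<in> carrier_vec (dimn p)" and "fb \<noteq> 0\<^sub>v (dimn p)"
    and "invertible_mat (Bmat p fb v)"
  shows "wgrad_conj (dimn p) (\<lambda>g. obj p g v) fb = 0\<^sub>v (dimn p)
     \<longleftrightarrow> inv_mat (Bmat p fb v) *\<^sub>v (Amat p fb v *\<^sub>v fb) = complex_of_real (lam p fb v) \<cdot>\<^sub>v fb"
proof -
  \<comment> \<open>Nt \<ge> 1 follows from fb \<noteq> 0, and a_k, eta_mc and v enter only algebraically.\<close>
  have "wgrad_conj (dimn p) (\<lambda>g. obj p g v) fb = 0\<^sub>v (dimn p)
      \<longleftrightarrow> Amat p fb v *\<^sub>v fb = complex_of_real (lam p fb v) \<cdot>\<^sub>v (Bmat p fb v *\<^sub>v fb)"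
    by (rule wgrad_conj_obj_eq_0_iff[OF assms(1,4-7,11,12)])
  also have "\<dots> \<longleftrightarrow> inv_mat (Bmat p fb v) *\<^sub>v (Amat p fb v *\<^sub>v fb) = complex_of_real (lam p fb v) \<cdot>\<^sub>v fb"
    using inv_mat_mult_vec_eq_iff[OF Amat_Bmat_carrier(2) assms(13)]
      mult_mat_vec_carrier[OF Amat_Bmat_carrier(1) assms(11)] assms(11) by simp
  finally show ?thesis .
qed

end
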